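(* Let $1\le p<\infty$ and let $T=M_wEM_u:L^p(\Sigma)\to L^p(\Sigma)$ be a bounded WCE operator. Write $X=\left(\bigcup_{n}A_n\right)\cup B$ where $\{A_n\}$ are pairwise disjoint $\mathcal{A}$-atoms and $B\in\mathcal{A}$ is the non-atomic part. Suppose $(X,\mathcal{A},\mu|_{\mathcal{A}})$ is not purely atomic (i.e. $\mu(B)>0$) and that the restriction of $T$ to the non-atomic part, $f\mapsto T(f\chi_B)$, is a non-zero operator. Then $T$ is not nuclear on $L^p(\Sigma)$.
   Context: $(X,\Sigma,\mu)$ is a complete $\sigma$-finite measure space and $\mathcal{A}\subseteq\Sigma$ is a sub-$\sigma$-algebra such that $(X,\mathcal{A},\mu|_{\mathcal{A}})$ is $\sigma$-finite. $E=E^{\mathcal{A}}$ is the conditional expectation with respect to $\mathcal{A}$. For measurable $w,u$ such that $uf$ is conditionable for all $f\in L^p(\Sigma)$, the WCE operator is $Tf=w\,E(uf)$. An $\mathcal{A}$-atom is a set $A\in\mathcal{A}$ with $\mu(A)>0$ such that every $F\in\mathcal{A}$, $F\subseteq A$, has $\mu(F)=0$ or $\mu(F)=\mu(A)$. Every $\sigma$-finite $(X,\mathcal{A},\mu)$ decomposes uniquely as $X=(\bigcup_n A_n)\cup B$ with $\{A_n\}$ countably many pairwise disjoint $\mathcal{A}$-atoms and $B$ disjoint from them and containing no $\mathcal{A}$-atoms. A bounded operator is nuclear if $Tx=\sum_n f_n(x)y_n$ with $\sum_n\|f_n\|\|y_n\|<\infty$. *)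

theory Defs
  imports "HOL-Analysis.Analysis" "HOL-Probability.Conditional_Expectation"
begin

(* L^p(Sigma) at the level of functions (a.e.-classes are handled through the seminorm) *)
definition lp_space :: "'a measure \<Rightarrow> real \<Rightarrow> ('a \<Rightarrow> real) set" where
  "lp_space M p = {f. f \<in> borel_measurable M \<and> integrable M (\<lambda>x. \<bar>f x\<bar> powr p)}"

definition lp_norm :: "'a measure \<Rightarrow> real \<Rightarrow> ('a \<Rightarrow> real) \<Rightarrow> real" where
  "lp_norm M p f = (\<integral>x. \<bar>f x\<bar> powr p \<partial>M) powr (1 / p)"

definition conditionable :: "'a measure \<Rightarrow> 'a measure \<Rightarrow> ('a \<Rightarrow> real) \<Rightarrow> bool" where
  "conditionable M F g \<longleftrightarrow> g \<in> borel_measurable M \<and>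
     (AE x in M. nn_cond_exp M F (\<lambda>y. ennreal \<bar>g y\<bar>) x < \<infinity>)"

definition wce :: "'a measure \<Rightarrow> 'a measure \<Rightarrow> ('a \<Rightarrow> real) \<Rightarrow> ('a \<Rightarrow> real)
                    \<Rightarrow> ('a \<Rightarrow> real) \<Rightarrow> ('a \<Rightarrow> real)" where
  "wce M F w u f = (\<lambda>x. w x * real_cond_exp M F (\<lambda>y. u y * f y) x)"

definition lp_bounded_operator :: "'a measure \<Rightarrow> real \<Rightarrow> (('a \<Rightarrow> real) \<Rightarrow> ('a \<Rightarrow> real)) \<Rightarrow> bool" where
  "lp_bounded_operator M p T \<longleftrightarrow>
     (\<forall>f \<in> lp_space M p. T f \<in> lp_space M p) \<and>
     (\<exists>C. \<forall>f \<in> lp_space M p. lp_norm M p (T f) \<le> C * lp_norm M p f)"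

definition lp_functional :: "'a measure \<Rightarrow> real \<Rightarrow> (('a \<Rightarrow> real) \<Rightarrow> real) \<Rightarrow> bool" where
  "lp_functional M p \<phi> \<longleftrightarrow>
     (\<forall>f \<in> lp_space M p. \<forall>g \<in> lp_space M p. \<forall>a b :: real.
         \<phi> (\<lambda>x. a * f x + b * g x) = a * \<phi> f + b * \<phi> g) \<and>
     (\<exists>K. \<forall>f \<in> lp_space M p. \<bar>\<phi> f\<bar> \<le> K * lp_norm M p f)"

definition lp_functional_norm :: "'a measure \<Rightarrow> real \<Rightarrow> (('a \<Rightarrow> real) \<Rightarrow> real) \<Rightarrow> real" where
  "lp_functional_norm M p \<phi> = Sup {\<bar>\<phi> f\<bar> | f. f \<in> lp_space M p \<and> lp_norm M p f \<le> 1}"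

definition lp_nuclear :: "'a measure \<Rightarrow> real \<Rightarrow> (('a \<Rightarrow> real) \<Rightarrow> ('a \<Rightarrow> real)) \<Rightarrow> bool" where
  "lp_nuclear M p T \<longleftrightarrow> lp_bounded_operator M p T \<and>
     (\<exists>(\<phi> :: nat \<Rightarrow> ('a \<Rightarrow> real) \<Rightarrow> real) (y :: nat \<Rightarrow> 'a \<Rightarrow> real).
        (\<forall>n. lp_functional M p (\<phi> n)) \<and> (\<forall>n. y n \<in> lp_space M p) \<and>
        summable (\<lambda>n. lp_functional_norm M p (\<phi> n) * lp_norm M p (y n)) \<and>
        (\<forall>f \<in> lp_space M p.
           (\<lambda>N. lp_norm M p (\<lambda>x. T f x - (\<Sum>n<N. \<phi> n f * y n x))) \<longlonglongrightarrow> 0))"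

definition sub_atom :: "'a measure \<Rightarrow> 'a measure \<Rightarrow> 'a set \<Rightarrow> bool" where
  "sub_atom M F A \<longleftrightarrow> A \<in> sets F \<and> emeasure M A > 0 \<and>
     (\<forall>C \<in> sets F. C \<subseteq> A \<longrightarrow> emeasure M C = 0 \<or> emeasure M C = emeasure M A)"

end

theory Submission
  imports Defs
begin

(* A nuclear operator T on L^p is compact in the following sense: up to a small tail of its nuclear
   series it is governed by finitely many bounded functionals, so by pigeonhole every bounded sequence
   (f_i) has two terms with ||T (f_i - f_j)|| arbitrarily small.
   A weighted conditional expectation operator T = M_w E M_u, on the other hand, commutes with
   multiplication by nonnegative A-measurable functions. Let h = f chi_B with T h <> 0. Comparing the
   conditional expectations of |T h|^p and |h|^p yields an A-set H inside B of positive measure on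
   whose A-subsets G the ratio of int_G |h|^p to int_G |T h|^p is bounded. As B has no atoms, H
   contains infinitely many disjoint A-sets G_i of positive measure, and renormalising chi_(G_i) h
   gives a bounded sequence with ||T (f_i - f_j)|| >= 1 for i <> j. *)

lemma lp_spaceD:
  assumes "f \<in> lp_space M p"
  shows "f \<in> borel_measurable M" "integrable M (\<lambda>x. \<bar>f x\<bar> powr p)"
  using assms unfolding lp_space_def by auto

lemma lp_bounded_operatorD:
  "lp_bounded_operator M p T \<Longrightarrow> f \<in> lp_space M p \<Longrightarrow> T f \<in> lp_space M p"
  unfolding lp_bounded_operator_def by blast

lemma lp_norm_nonneg: "lp_norm M p f \<ge> 0"
  unfolding lp_norm_def by simp

lemma lp_norm_powr:
  assumes "p > 0"
  shows "lp_norm M p f powr p = (\<integral>x. \<bar>f x\<bar> powr p \<partial>M)"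
  unfolding lp_norm_def using assms by (simp add: powr_powr)

lemma lp_norm_le_iff:
  assumes "p > 0" "X \<ge> 0"
  shows "lp_norm M p f \<le> X \<longleftrightarrow> (\<integral>x. \<bar>f x\<bar> powr p \<partial>M) \<le> X powr p"
  using assms lp_norm_nonneg[of M p f]
  by (metis lp_norm_powr linorder_not_less powr_less_mono2 powr_mono2 less_imp_le)

lemma lp_norm_ge_iff:
  assumes "p > 0" "X \<ge> 0"
  shows "X \<le> lp_norm M p f \<longleftrightarrow> X powr p \<le> (\<integral>x. \<bar>f x\<bar> powr p \<partial>M)"
  using assms lp_norm_nonneg[of M p f]
  by (metis lp_norm_powr linorder_not_less powr_less_mono2 powr_mono2 less_imp_le)

lemma lp_norm_zero_imp_AE_zero:
  assumes "f \<in> lp_space M p" "p > 0" "lp_norm M p f = 0"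
  shows "AE x in M. f x = 0"
proof -
  have "(\<integral>x. \<bar>f x\<bar> powr p \<partial>M) = 0"
    using assms(3) lp_norm_powr[OF assms(2), of M f] by simp
  then have "AE x in M. \<bar>f x\<bar> powr p = 0"
    using integral_nonneg_eq_0_iff_AE[OF lp_spaceD(2)[OF assms(1)]] by simp
  then show ?thesis by eventually_elim simp
qed

lemma integral_indicator_powr_le_lp_norm:
  assumes "g \<in> lp_space M p" "G \<in> sets M" "p > 0"
  shows "(\<integral>x. indicator G x * \<bar>g x\<bar> powr p \<partial>M) \<le> lp_norm M p g powr p"
proof -
  have "(\<integral>x. indicator G x * \<bar>g x\<bar> powr p \<partial>M) \<le> (\<integral>x. \<bar>g x\<bar> powr p \<partial>M)"
    using lp_spaceD(2)[OF assms(1)] integrable_real_mult_indicator[OF assms(2) lp_spaceD(2)[OF assms(1)]]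
    by (intro integral_mono) (auto simp: indicator_def mult.commute)
  then show ?thesis using lp_norm_powr[OF assms(3), of M g] by simp
qed

lemma lp_space_mult_bounded:
  assumes "f \<in> lp_space M p" "\<psi> \<in> borel_measurable M" "\<And>x. \<bar>\<psi> x\<bar> \<le> c" "p > 0"
  shows "(\<lambda>x. \<psi> x * f x) \<in> lp_space M p"
proof -
  note [measurable] = assms(2) lp_spaceD(1)[OF assms(1)]
  have bound: "\<bar>\<psi> x * f x\<bar> powr p \<le> c powr p * \<bar>f x\<bar> powr p" for x
  proof -
    have "\<bar>\<psi> x * f x\<bar> powr p = \<bar>\<psi> x\<bar> powr p * \<bar>f x\<bar> powr p" by (simp add: abs_mult powr_mult)
    also have "\<dots> \<le> c powr p * \<bar>f x\<bar> powr p"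
      using assms(3)[of x] assms(4) by (intro mult_right_mono powr_mono2) auto
    finally show ?thesis .
  qed
  have "integrable M (\<lambda>x. \<bar>\<psi> x * f x\<bar> powr p)"
  proof (rule Bochner_Integration.integrable_bound)
    show "integrable M (\<lambda>x. c powr p * \<bar>f x\<bar> powr p)" using lp_spaceD(2)[OF assms(1)] by simp
    show "(\<lambda>x. \<bar>\<psi> x * f x\<bar> powr p) \<in> borel_measurable M" by measurable
    show "AE x in M. norm (\<bar>\<psi> x * f x\<bar> powr p) \<le> norm (c powr p * \<bar>f x\<bar> powr p)"
      using bound by (intro AE_I2) simp
  qed
  then show ?thesis unfolding lp_space_def by simp
qed

lemma lp_space_cmult: "f \<in> lp_space M p \<Longrightarrow> p > 0 \<Longrightarrow> (\<lambda>x. c * f x) \<in> lp_space M p"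
  using lp_space_mult_bounded[of f M p "\<lambda>_. c" "\<bar>c\<bar>"] by simp

lemma lp_norm_cmult:
  assumes "p > 0"
  shows "lp_norm M p (\<lambda>x. c * f x) = \<bar>c\<bar> * lp_norm M p f"
proof -
  have "(\<integral>x. \<bar>c * f x\<bar> powr p \<partial>M) = \<bar>c\<bar> powr p * (\<integral>x. \<bar>f x\<bar> powr p \<partial>M)"
    by (simp add: abs_mult powr_mult)
  then show ?thesis
    unfolding lp_norm_def using assms by (simp add: powr_mult powr_powr)
qed

lemma convex_on_powr_nonneg:
  assumes "p \<ge> 1"
  shows "convex_on {0..} (\<lambda>x::real. x powr p)"
proof
  fix t x y :: real
  assume t: "0 < t" "t < 1" and xy: "x \<in> {0..}" "y \<in> {0..}" "x < y"
  show "((1 - t) *\<^sub>R x + t *\<^sub>R y) powr p \<le> (1 - t) * x powr p + t * y powr p"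
  proof (cases "x = 0")
    case True
    have "t powr p \<le> t"
      using t assms by (metis less_imp_le powr_mono' powr_one_gt_zero_iff)
    then have "t powr p * y powr p \<le> t * y powr p" by (intro mult_right_mono) auto
    then show ?thesis using True t xy by (simp add: powr_mult)
  next
    case False
    then show ?thesis
      using convex_onD[OF powr_convex[OF assms], of t x y] t xy by auto
  qed
qed (simp add: convex_real_interval)

lemma powr_abs_add_le:
  fixes a b p :: real
  assumes "p \<ge> 0"
  shows "\<bar>a + b\<bar> powr p \<le> 2 powr p * (\<bar>a\<bar> powr p + \<bar>b\<bar> powr p)"
proof -
  have "\<bar>a + b\<bar> powr p \<le> (2 * max \<bar>a\<bar> \<bar>b\<bar>) powr p"
    using assms by (intro powr_mono2) auto
  also have "\<dots> = 2 powr p * max \<bar>a\<bar> \<bar>b\<bar> powr p" by (simp add: powr_mult)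
  also have "\<dots> \<le> 2 powr p * (\<bar>a\<bar> powr p + \<bar>b\<bar> powr p)"
    by (intro mult_left_mono) (simp_all add: max_def)
  finally show ?thesis .
qed

lemma lp_space_add:
  assumes "f \<in> lp_space M p" "g \<in> lp_space M p" "p > 0"
  shows "(\<lambda>x. f x + g x) \<in> lp_space M p"
proof -
  note [measurable] = lp_spaceD(1)[OF assms(1)] lp_spaceD(1)[OF assms(2)]
  have "integrable M (\<lambda>x. \<bar>f x + g x\<bar> powr p)"
  proof (rule Bochner_Integration.integrable_bound)
    show "integrable M (\<lambda>x. 2 powr p * (\<bar>f x\<bar> powr p + \<bar>g x\<bar> powr p))"
      using lp_spaceD(2)[OF assms(1)] lp_spaceD(2)[OF assms(2)] by simp
    show "(\<lambda>x. \<bar>f x + g x\<bar> powr p) \<in> borel_measurable M" by measurable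
    show "AE x in M. norm (\<bar>f x + g x\<bar> powr p) \<le> norm (2 powr p * (\<bar>f x\<bar> powr p + \<bar>g x\<bar> powr p))"
      using powr_abs_add_le[of p] assms(3) by (intro AE_I2) simp
  qed
  then show ?thesis unfolding lp_space_def by simp
qed

text \<open>The pointwise core of Minkowski's inequality.\<close>

lemma abs_add_powr_le_convex_combination:
  fixes a b A B p :: real
  assumes "p \<ge> 1" "A > 0" "B > 0"
  shows "\<bar>a + b\<bar> powr p \<le>
    (A + B) powr p * (A / (A + B) * (\<bar>a\<bar> / A) powr p + B / (A + B) * (\<bar>b\<bar> / B) powr p)"
proof -
  have "\<bar>a\<bar> + \<bar>b\<bar> = (A + B) * ((A / (A + B)) *\<^sub>R (\<bar>a\<bar> / A) + (B / (A + B)) *\<^sub>R (\<bar>b\<bar> / B))"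
    using assms(2,3) by (simp add: add_divide_distrib[symmetric])
  moreover have "\<bar>a + b\<bar> powr p \<le> (\<bar>a\<bar> + \<bar>b\<bar>) powr p"
    using assms(1) by (intro powr_mono2) auto
  ultimately have "\<bar>a + b\<bar> powr p
      \<le> (A + B) powr p * ((A / (A + B)) *\<^sub>R (\<bar>a\<bar> / A) + (B / (A + B)) *\<^sub>R (\<bar>b\<bar> / B)) powr p"
    using assms(2,3) by (simp add: powr_mult)
  also have "\<dots> \<le> (A + B) powr p * (A / (A + B) * (\<bar>a\<bar> / A) powr p + B / (A + B) * (\<bar>b\<bar> / B) powr p)"
  proof (intro mult_left_mono)
    have "1 - B / (A + B) = A / (A + B)" using assms(2,3) by (simp add: field_simps)
    then show "((A / (A + B)) *\<^sub>R (\<bar>a\<bar> / A) + (B / (A + B)) *\<^sub>R (\<bar>b\<bar> / B)) powr p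
        \<le> A / (A + B) * (\<bar>a\<bar> / A) powr p + B / (A + B) * (\<bar>b\<bar> / B) powr p"
      using convex_onD[OF convex_on_powr_nonneg[OF assms(1)], of "B / (A + B)" "\<bar>a\<bar> / A" "\<bar>b\<bar> / B"] assms(2,3)
      by simp
  qed simp
  finally show ?thesis .
qed

lemma lp_norm_add_le_bounds:
  assumes "f \<in> lp_space M p" "g \<in> lp_space M p" "p \<ge> 1"
    and "A > 0" "B > 0" "lp_norm M p f \<le> A" "lp_norm M p g \<le> B"
  shows "lp_norm M p (\<lambda>x. f x + g x) \<le> A + B"
proof -
  have p: "p > 0" using assms(3) by simp
  note f_int = lp_spaceD(2)[OF assms(1)] and g_int = lp_spaceD(2)[OF assms(2)]
  define \<alpha> \<beta> where "\<alpha> = A / (A + B) / A powr p" and "\<beta> = B / (A + B) / B powr p"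
  have "\<bar>f x + g x\<bar> powr p \<le> (A + B) powr p * (\<alpha> * \<bar>f x\<bar> powr p + \<beta> * \<bar>g x\<bar> powr p)" for x
    using abs_add_powr_le_convex_combination[OF assms(3-5), of "f x" "g x"] assms(4,5)
    unfolding \<alpha>_def \<beta>_def by (simp add: powr_divide)
  then have "(\<integral>x. \<bar>f x + g x\<bar> powr p \<partial>M)
      \<le> (\<integral>x. (A + B) powr p * (\<alpha> * \<bar>f x\<bar> powr p + \<beta> * \<bar>g x\<bar> powr p) \<partial>M)"
    using f_int g_int lp_spaceD(2)[OF lp_space_add[OF assms(1,2) p]] by (intro integral_mono) auto
  also have "\<dots> = (A + B) powr p * (\<alpha> * (\<integral>x. \<bar>f x\<bar> powr p \<partial>M) + \<beta> * (\<integral>x. \<bar>g x\<bar> powr p \<partial>M))"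
    using f_int g_int by simp
  also have "\<dots> \<le> (A + B) powr p * (\<alpha> * A powr p + \<beta> * B powr p)"
    using assms(4-7) lp_norm_le_iff[OF p, of A M f] lp_norm_le_iff[OF p, of B M g]
    unfolding \<alpha>_def \<beta>_def by (intro mult_left_mono add_mono) auto
  also have "\<alpha> * A powr p + \<beta> * B powr p = 1"
    using assms(4,5) unfolding \<alpha>_def \<beta>_def by (simp add: add_divide_distrib[symmetric])
  finally show ?thesis
    using lp_norm_le_iff[OF p, of "A + B" M "\<lambda>x. f x + g x"] assms(4,5) by simp
qed

lemma lp_norm_triangle:
  assumes "f \<in> lp_space M p" "g \<in> lp_space M p" "p \<ge> 1"
  shows "lp_norm M p (\<lambda>x. f x + g x) \<le> lp_norm M p f + lp_norm M p g"
proof (rule field_le_epsilon)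
  fix e :: real assume "e > 0"
  then have "lp_norm M p (\<lambda>x. f x + g x) \<le> (lp_norm M p f + e / 2) + (lp_norm M p g + e / 2)"
    using lp_norm_nonneg[of M p] by (intro lp_norm_add_le_bounds[OF assms]) (auto intro: add_nonneg_pos)
  then show "lp_norm M p (\<lambda>x. f x + g x) \<le> lp_norm M p f + lp_norm M p g + e" by simp
qed

lemma lp_space_diff:
  "f \<in> lp_space M p \<Longrightarrow> g \<in> lp_space M p \<Longrightarrow> p > 0 \<Longrightarrow> (\<lambda>x. f x - g x) \<in> lp_space M p"
  using lp_space_add[OF _ lp_space_cmult[of g M p "-1"]] by simp

lemma lp_norm_diff_le:
  assumes "f \<in> lp_space M p" "g \<in> lp_space M p" "p \<ge> 1"
  shows "lp_norm M p (\<lambda>x. f x - g x) \<le> lp_norm M p f + lp_norm M p g"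
  using lp_norm_triangle[OF assms(1) lp_space_cmult[OF assms(2)] assms(3), of "-1"]
    lp_norm_cmult[of p M "-1" g] assms(3) by simp

lemma lp_norm_sum_le:
  fixes N :: nat
  assumes "\<And>n. n < N \<Longrightarrow> y n \<in> lp_space M p" "p \<ge> 1"
  shows "(\<lambda>x. \<Sum>n<N. c n * y n x) \<in> lp_space M p"
    and "lp_norm M p (\<lambda>x. \<Sum>n<N. c n * y n x) \<le> (\<Sum>n<N. \<bar>c n\<bar> * lp_norm M p (y n))"
proof -
  have "(\<lambda>x. \<Sum>n<N. c n * y n x) \<in> lp_space M p \<and>
      lp_norm M p (\<lambda>x. \<Sum>n<N. c n * y n x) \<le> (\<Sum>n<N. \<bar>c n\<bar> * lp_norm M p (y n))"
    using assms(1)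
  proof (induction N)
    case 0
    then show ?case by (simp add: lp_space_def lp_norm_def)
  next
    case (Suc N)
    then have IH: "(\<lambda>x. \<Sum>n<N. c n * y n x) \<in> lp_space M p"
        "lp_norm M p (\<lambda>x. \<Sum>n<N. c n * y n x) \<le> (\<Sum>n<N. \<bar>c n\<bar> * lp_norm M p (y n))"
      by auto
    have yN: "(\<lambda>x. c N * y N x) \<in> lp_space M p"
      using lp_space_cmult[OF Suc.prems[of N]] assms(2) by simp
    show ?case
      using lp_space_add[OF IH(1) yN] lp_norm_triangle[OF IH(1) yN assms(2)] IH(2)
        lp_norm_cmult[of p M "c N" "y N"] assms(2) by simp
  qed
  then show "(\<lambda>x. \<Sum>n<N. c n * y n x) \<in> lp_space M p"
    and "lp_norm M p (\<lambda>x. \<Sum>n<N. c n * y n x) \<le> (\<Sum>n<N. \<bar>c n\<bar> * lp_norm M p (y n))"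
    by auto
qed

lemma lp_functional_bound:
  assumes "lp_functional M p \<phi>" "p > 0"
  shows "lp_functional_norm M p \<phi> \<ge> 0"
    and "f \<in> lp_space M p \<Longrightarrow> \<bar>\<phi> f\<bar> \<le> lp_functional_norm M p \<phi> * lp_norm M p f"
proof -
  obtain K where K: "\<And>g. g \<in> lp_space M p \<Longrightarrow> \<bar>\<phi> g\<bar> \<le> K * lp_norm M p g"
    using assms(1) unfolding lp_functional_def by blast
  define S where "S = {\<bar>\<phi> g\<bar> | g. g \<in> lp_space M p \<and> lp_norm M p g \<le> 1}"
  have "bdd_above S"
  proof (rule bdd_aboveI)
    fix s assume "s \<in> S"
    then obtain g where g: "s = \<bar>\<phi> g\<bar>" "g \<in> lp_space M p" "lp_norm M p g \<le> 1"
      unfolding S_def by blast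
    have "K * lp_norm M p g \<le> max K 0"
      using g(3) lp_norm_nonneg[of M p g] by (cases "K \<ge> 0") (auto intro: mult_left_le mult_nonpos_nonneg)
    then show "s \<le> max K 0" using K[OF g(2)] g(1) by linarith
  qed
  then have le_norm: "\<bar>\<phi> g\<bar> \<le> lp_functional_norm M p \<phi>" if "g \<in> lp_space M p" "lp_norm M p g \<le> 1" for g
    unfolding lp_functional_norm_def using that by (intro cSup_upper) (auto simp: S_def)
  show "lp_functional_norm M p \<phi> \<ge> 0"
    using le_norm[of "\<lambda>_. 0"] by (simp add: lp_space_def lp_norm_def)
  assume f: "f \<in> lp_space M p"
  show "\<bar>\<phi> f\<bar> \<le> lp_functional_norm M p \<phi> * lp_norm M p f"
  proof (cases "lp_norm M p f = 0")
    case True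
    then show ?thesis using K[OF f] by simp
  next
    case False
    define r where "r = lp_norm M p f"
    have r: "r > 0" using False lp_norm_nonneg[of M p f] unfolding r_def by linarith
    have "\<phi> (\<lambda>x. (1 / r) * f x + 0 * f x) = (1 / r) * \<phi> f + 0 * \<phi> f"
      using assms(1) f unfolding lp_functional_def by blast
    then have "\<bar>\<phi> f\<bar> / r = \<bar>\<phi> (\<lambda>x. (1 / r) * f x)\<bar>" using r by (simp add: abs_mult)
    also have "\<dots> \<le> lp_functional_norm M p \<phi>"
    proof (rule le_norm)
      show "(\<lambda>x. (1 / r) * f x) \<in> lp_space M p" using lp_space_cmult[OF f assms(2)] .
      show "lp_norm M p (\<lambda>x. (1 / r) * f x) \<le> 1"
        using r unfolding lp_norm_cmult[OF assms(2)] r_def by simp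
    qed
    finally show ?thesis using r unfolding r_def by (simp add: field_simps)
  qed
qed

lemma lp_norm_le_suminf:
  assumes "p \<ge> 1" "t \<in> lp_space M p" "\<And>n. y n \<in> lp_space M p"
    and "summable (\<lambda>n. \<bar>c n\<bar> * lp_norm M p (y n))"
    and "(\<lambda>N. lp_norm M p (\<lambda>x. t x - (\<Sum>n<N. c n * y n x))) \<longlonglongrightarrow> 0"
  shows "lp_norm M p t \<le> (\<Sum>n. \<bar>c n\<bar> * lp_norm M p (y n))"
proof -
  have "lp_norm M p t - (\<Sum>n. \<bar>c n\<bar> * lp_norm M p (y n)) \<le>
      lp_norm M p (\<lambda>x. t x - (\<Sum>n<N. c n * y n x))" for N
  proof -
    define s where "s x = (\<Sum>n<N. c n * y n x)" for x
    have s: "s \<in> lp_space M p" "lp_norm M p s \<le> (\<Sum>n<N. \<bar>c n\<bar> * lp_norm M p (y n))"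
      using lp_norm_sum_le[OF assms(3) assms(1)] unfolding s_def by auto
    have "lp_norm M p t \<le> lp_norm M p (\<lambda>x. t x - s x) + lp_norm M p s"
      using lp_norm_triangle[OF lp_space_diff[OF assms(2) s(1)] s(1) assms(1)] assms(1) by simp
    also have "(\<Sum>n<N. \<bar>c n\<bar> * lp_norm M p (y n)) \<le> (\<Sum>n. \<bar>c n\<bar> * lp_norm M p (y n))"
      using assms(4) by (intro sum_le_suminf) (auto simp: lp_norm_nonneg)
    ultimately show ?thesis using s(2) unfolding s_def by linarith
  qed
  then have "lp_norm M p t - (\<Sum>n. \<bar>c n\<bar> * lp_norm M p (y n)) \<le> 0"
    by (intro LIMSEQ_le_const[OF assms(5)]) blast
  then show ?thesis by simp
qed

lemma lp_nuclear_tail_estimate: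
  assumes "p \<ge> 1" "lp_bounded_operator M p T" "\<And>n. lp_functional M p (\<phi> n)" "\<And>n. y n \<in> lp_space M p"
    and "summable (\<lambda>n. lp_functional_norm M p (\<phi> n) * lp_norm M p (y n))"
    and "g \<in> lp_space M p" "(\<lambda>N. lp_norm M p (\<lambda>x. T g x - (\<Sum>n<N. \<phi> n g * y n x))) \<longlonglongrightarrow> 0"
  shows "lp_norm M p (T g) \<le> (\<Sum>n<N. \<bar>\<phi> n g\<bar> * lp_norm M p (y n))
    + lp_norm M p g * (\<Sum>n. lp_functional_norm M p (\<phi> (n + N)) * lp_norm M p (y (n + N)))"
proof -
  have p: "p > 0" using assms(1) by simp
  define c where "c n = lp_functional_norm M p (\<phi> n) * lp_norm M p (y n)" for n
  define a where "a n = \<bar>\<phi> n g\<bar> * lp_norm M p (y n)" for n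
  have a: "0 \<le> a n" "a n \<le> lp_norm M p g * c n" for n
  proof -
    have "a n \<le> (lp_functional_norm M p (\<phi> n) * lp_norm M p g) * lp_norm M p (y n)"
      unfolding a_def by (intro mult_right_mono lp_functional_bound(2)[OF assms(3) p assms(6)] lp_norm_nonneg)
    then show "a n \<le> lp_norm M p g * c n" unfolding c_def by (simp add: ac_simps)
    show "0 \<le> a n" unfolding a_def by (simp add: lp_norm_nonneg)
  qed
  have summ_c: "summable c" using assms(5) unfolding c_def .
  have summ_a: "summable a"
    using a by (intro summable_comparison_test'[where N = 0, OF summable_mult[OF summ_c]]) simp
  have Tg: "T g \<in> lp_space M p" by (rule lp_bounded_operatorD[OF assms(2,6)])
  have "lp_norm M p (T g) \<le> suminf a"
    using summ_a unfolding a_def by (rule lp_norm_le_suminf[OF assms(1) Tg assms(4) _ assms(7)])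
  also have "\<dots> = (\<Sum>n<N. a n) + (\<Sum>n. a (n + N))"
    using suminf_split_initial_segment[OF summ_a, of N] by simp
  also have "(\<Sum>n. a (n + N)) \<le> (\<Sum>n. lp_norm M p g * c (n + N))"
  proof (rule suminf_le)
    show "summable (\<lambda>n. a (n + N))" using summ_a by (rule summable_ignore_initial_segment)
    show "summable (\<lambda>n. lp_norm M p g * c (n + N))"
      using summable_ignore_initial_segment[OF summ_c] by (rule summable_mult)
  qed (rule a(2))
  also have "\<dots> = lp_norm M p g * (\<Sum>n. c (n + N))"
    by (rule suminf_mult) (rule summable_ignore_initial_segment[OF summ_c])
  finally show ?thesis unfolding a_def c_def by simp
qed

lemma bounded_sequence_close_pair:
  fixes v :: "nat \<Rightarrow> nat \<Rightarrow> real"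
  assumes "\<And>i n. n < N \<Longrightarrow> \<bar>v i n\<bar> \<le> K" "\<eta> > 0"
  obtains i j where "i \<noteq> j" "\<And>n. n < N \<Longrightarrow> \<bar>v i n - v j n\<bar> < \<eta>"
proof -
  define cell where "cell i = restrict (\<lambda>n. \<lfloor>v i n / \<eta>\<rfloor>) {..<N}" for i
  have "cell i \<in> {..<N} \<rightarrow>\<^sub>E {\<lfloor>- (K / \<eta>)\<rfloor>..\<lfloor>K / \<eta>\<rfloor>}" for i
  proof -
    have "- (K / \<eta>) \<le> v i n / \<eta> \<and> v i n / \<eta> \<le> K / \<eta>" if "n < N" for n
      using assms(1)[OF that, of i] divide_right_mono[of "- K" "v i n" \<eta>] divide_right_mono[of "v i n" K \<eta>]
        assms(2) by (auto simp: abs_le_iff)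
    then show ?thesis unfolding cell_def by (auto simp: PiE_iff intro: floor_mono)
  qed
  then have "range cell \<subseteq> {..<N} \<rightarrow>\<^sub>E {\<lfloor>- (K / \<eta>)\<rfloor>..\<lfloor>K / \<eta>\<rfloor>}" by blast
  then have "finite (range cell)"
    by (rule finite_subset) (simp add: finite_PiE)
  have "\<not> inj cell"
  proof
    assume "inj cell"
    with \<open>finite (range cell)\<close> have "finite (UNIV :: nat set)" by (rule finite_imageD)
    then show False by simp
  qed
  then obtain i j where ij: "i \<noteq> j" "cell i = cell j" unfolding inj_def by blast
  have "\<bar>v i n - v j n\<bar> < \<eta>" if "n < N" for n
  proof -
    have "\<lfloor>v i n / \<eta>\<rfloor> = \<lfloor>v j n / \<eta>\<rfloor>"
      using fun_cong[OF ij(2), of n] that unfolding cell_def by simp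
    then have "\<bar>v i n / \<eta> - v j n / \<eta>\<bar> < 1"
      using floor_correct[of "v i n / \<eta>"] floor_correct[of "v j n / \<eta>"] by linarith
    then show ?thesis using assms(2) by (simp add: diff_divide_distrib[symmetric] abs_divide)
  qed
  then show ?thesis by (rule that[OF ij(1)])
qed

lemma lp_nuclear_finitely_controlled:
  assumes "p \<ge> 1" "lp_nuclear M p T" "R \<ge> 0" "e > 0"
  obtains \<phi> :: "nat \<Rightarrow> ('a \<Rightarrow> real) \<Rightarrow> real" and N :: nat and \<eta> :: real
  where "\<And>n. lp_functional M p (\<phi> n)" "\<eta> > 0"
    "\<And>g. g \<in> lp_space M p \<Longrightarrow> lp_norm M p g \<le> R \<Longrightarrow> (\<And>n. n < N \<Longrightarrow> \<bar>\<phi> n g\<bar> < \<eta>) \<Longrightarrow>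
       lp_norm M p (T g) < e"
proof -
  have p: "p > 0" using assms(1) by simp
  obtain \<phi> y where bnd: "lp_bounded_operator M p T" and \<phi>: "\<And>n. lp_functional M p (\<phi> n)"
    and y: "\<And>n. y n \<in> lp_space M p"
    and summ: "summable (\<lambda>n. lp_functional_norm M p (\<phi> n) * lp_norm M p (y n))"
    and conv: "\<And>g. g \<in> lp_space M p \<Longrightarrow>
        (\<lambda>N. lp_norm M p (\<lambda>x. T g x - (\<Sum>n<N. \<phi> n g * y n x))) \<longlonglongrightarrow> 0"
    using assms(2) unfolding lp_nuclear_def by blast
  define tail where "tail N = (\<Sum>n. lp_functional_norm M p (\<phi> (n + N)) * lp_norm M p (y (n + N)))" for N
  have "e / (2 * (R + 1)) > 0" using assms(3,4) by simp
  then obtain N where "norm (tail N) < e / (2 * (R + 1))"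
    using suminf_exist_split[OF _ summ] unfolding tail_def by blast
  then have tail_N: "tail N < e / (2 * (R + 1))" by simp
  have tail_nonneg: "0 \<le> tail N"
    unfolding tail_def by (rule suminf_nonneg[OF summable_ignore_initial_segment[OF summ]])
      (intro mult_nonneg_nonneg lp_functional_bound(1)[OF \<phi> p] lp_norm_nonneg)
  define Y where "Y = (\<Sum>n<N. lp_norm M p (y n))"
  have Y: "Y \<ge> 0" unfolding Y_def by (simp add: sum_nonneg lp_norm_nonneg)
  define \<eta> where "\<eta> = e / (2 * (Y + 1))"
  show ?thesis
  proof (rule that[OF \<phi>])
    show "\<eta> > 0" unfolding \<eta>_def using assms(4) Y by simp
    fix g assume g: "g \<in> lp_space M p" "lp_norm M p g \<le> R" and small: "\<And>n. n < N \<Longrightarrow> \<bar>\<phi> n g\<bar> < \<eta>"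
    have "(\<Sum>n<N. \<bar>\<phi> n g\<bar> * lp_norm M p (y n)) \<le> (\<Sum>n<N. \<eta> * lp_norm M p (y n))"
      using small by (intro sum_mono mult_right_mono) (auto simp: lp_norm_nonneg less_imp_le)
    also have "\<dots> = \<eta> * Y" unfolding Y_def by (simp add: sum_distrib_left)
    also have "\<dots> < e / 2" unfolding \<eta>_def using Y assms(4) by (simp add: field_simps)
    finally have head: "(\<Sum>n<N. \<bar>\<phi> n g\<bar> * lp_norm M p (y n)) < e / 2" .
    have "lp_norm M p g * tail N \<le> R * (e / (2 * (R + 1)))"
      using assms(3) by (intro mult_mono[OF g(2) less_imp_le[OF tail_N] _ tail_nonneg]) simp
    also have "\<dots> \<le> e / 2" using assms(3,4) by (simp add: field_simps)
    finally show "lp_norm M p (T g) < e"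
      using lp_nuclear_tail_estimate[OF assms(1) bnd \<phi> y summ g(1) conv[OF g(1)], of N] head
      unfolding tail_def by linarith
  qed
qed

lemma lp_nuclear_close_images:
  fixes f :: "nat \<Rightarrow> 'a \<Rightarrow> real"
  assumes "p \<ge> 1" "lp_nuclear M p T" "\<And>i. f i \<in> lp_space M p" "\<And>i. lp_norm M p (f i) \<le> \<rho>"
    and "e > 0"
  obtains i j where "i \<noteq> j" "lp_norm M p (T (\<lambda>x. f i x - f j x)) < e"
proof -
  have p: "p > 0" using assms(1) by simp
  have \<rho>: "2 * \<rho> \<ge> 0" using assms(4)[of 0] lp_norm_nonneg[of M p "f 0"] by linarith
  obtain \<phi> :: "nat \<Rightarrow> ('a \<Rightarrow> real) \<Rightarrow> real" and N \<eta> where \<phi>: "\<And>n. lp_functional M p (\<phi> n)"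
    and \<eta>: "\<eta> > 0"
    and small: "\<And>g. g \<in> lp_space M p \<Longrightarrow> lp_norm M p g \<le> 2 * \<rho> \<Longrightarrow>
        (\<And>n. n < N \<Longrightarrow> \<bar>\<phi> n g\<bar> < \<eta>) \<Longrightarrow> lp_norm M p (T g) < e"
    using lp_nuclear_finitely_controlled[OF assms(1,2) \<rho> assms(5)] by metis
  have bound: "\<bar>\<phi> n (f i)\<bar> \<le> (\<Sum>n<N. lp_functional_norm M p (\<phi> n)) * \<rho>" if "n < N" for i n
  proof -
    have "\<bar>\<phi> n (f i)\<bar> \<le> lp_functional_norm M p (\<phi> n) * lp_norm M p (f i)"
      by (rule lp_functional_bound(2)[OF \<phi> p assms(3)])
    also have "\<dots> \<le> lp_functional_norm M p (\<phi> n) * \<rho>"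
      by (rule mult_left_mono[OF assms(4) lp_functional_bound(1)[OF \<phi> p]])
    also have "\<dots> \<le> (\<Sum>n<N. lp_functional_norm M p (\<phi> n)) * \<rho>"
      using that \<rho> lp_functional_bound(1)[OF \<phi> p] by (intro mult_right_mono member_le_sum) auto
    finally show ?thesis .
  qed
  obtain i j where ij: "i \<noteq> j" and close: "\<And>n. n < N \<Longrightarrow> \<bar>\<phi> n (f i) - \<phi> n (f j)\<bar> < \<eta>"
    using bounded_sequence_close_pair[where v = "\<lambda>i n. \<phi> n (f i)", OF bound \<eta>] by blast
  have "\<phi> n (\<lambda>x. 1 * f i x + (-1) * f j x) = 1 * \<phi> n (f i) + (-1) * \<phi> n (f j)" for n
    using \<phi>[of n] assms(3) unfolding lp_functional_def by blast
  then have "\<bar>\<phi> n (\<lambda>x. f i x - f j x)\<bar> < \<eta>" if "n < N" for n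
    using close[OF that] by simp
  moreover have "lp_norm M p (\<lambda>x. f i x - f j x) \<le> 2 * \<rho>"
    using lp_norm_diff_le[OF assms(3,3) assms(1), of i j] assms(4)[of i] assms(4)[of j] by linarith
  ultimately have "lp_norm M p (T (\<lambda>x. f i x - f j x)) < e"
    using small[OF lp_space_diff[OF assms(3,3) p]] by blast
  then show ?thesis by (rule that[OF ij])
qed

lemma wce_pull_out:
  assumes "sigma_finite_subalgebra M F" "\<psi> \<in> borel_measurable F" "\<And>x. \<psi> x \<ge> 0"
    and "g \<in> borel_measurable M" "u \<in> borel_measurable M"
  shows "AE x in M. wce M F w u (\<lambda>y. \<psi> y * g y) x = \<psi> x * wce M F w u g x"
proof -
  interpret sigma_finite_subalgebra M F by fact
  note [measurable] = assms(2,4,5)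
  have pos: "(\<lambda>y. ennreal (u y * (\<psi> y * g y))) = (\<lambda>y. ennreal (\<psi> y) * ennreal (u y * g y))"
    using assms(3) by (intro ext) (simp add: ennreal_mult' mult.left_commute)
  have neg: "(\<lambda>y. ennreal (- (u y * (\<psi> y * g y)))) = (\<lambda>y. ennreal (\<psi> y) * ennreal (- (u y * g y)))"
    using assms(3) by (intro ext) (simp add: ennreal_mult'[symmetric] mult.left_commute)
  have "AE x in M. ennreal (\<psi> x) * nn_cond_exp M F (\<lambda>y. ennreal (u y * g y)) x
      = nn_cond_exp M F (\<lambda>y. ennreal (\<psi> y) * ennreal (u y * g y)) x"
    "AE x in M. ennreal (\<psi> x) * nn_cond_exp M F (\<lambda>y. ennreal (- (u y * g y))) x
      = nn_cond_exp M F (\<lambda>y. ennreal (\<psi> y) * ennreal (- (u y * g y))) x"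
    by (rule nn_cond_exp_prod; measurable)+
  then show ?thesis
  proof eventually_elim
    case (elim x)
    have "wce M F w u (\<lambda>y. \<psi> y * g y) x
        = w x * (enn2real (ennreal (\<psi> x) * nn_cond_exp M F (\<lambda>y. ennreal (u y * g y)) x)
          - enn2real (ennreal (\<psi> x) * nn_cond_exp M F (\<lambda>y. ennreal (- (u y * g y))) x))"
      unfolding wce_def real_cond_exp_def pos neg elim by simp
    also have "\<dots> = \<psi> x * wce M F w u g x"
      unfolding wce_def real_cond_exp_def using assms(3)[of x] by (simp add: enn2real_mult algebra_simps)
    finally show ?case .
  qed
qed

lemma nonatomic_split:
  assumes "sets F \<subseteq> sets M" "G \<in> sets F" "emeasure M G > 0" "\<not> sub_atom M F G"
  obtains C where "C \<in> sets F" "C \<subseteq> G" "emeasure M C > 0" "emeasure M (G - C) > 0"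
proof -
  obtain C where C: "C \<in> sets F" "C \<subseteq> G" "emeasure M C \<noteq> 0" "emeasure M C \<noteq> emeasure M G"
    using assms(2-4) unfolding sub_atom_def by blast
  have "emeasure M G = emeasure M C + emeasure M (G - C)"
    using C assms(1,2) by (subst plus_emeasure) (auto simp: Un_absorb1)
  then have "emeasure M (G - C) \<noteq> 0" using C(4) by auto
  then show ?thesis using that C by (simp add: zero_less_iff_neq_zero)
qed

lemma nonatomic_disjoint_family:
  assumes "sets F \<subseteq> sets M" "\<not> (\<exists>A. sub_atom M F A \<and> A \<subseteq> H)"
    and "H \<in> sets F" "emeasure M H > 0"
  obtains G :: "nat \<Rightarrow> 'a set" where "\<And>i. G i \<in> sets F" "\<And>i. G i \<subseteq> H"
    "\<And>i. emeasure M (G i) > 0" "disjoint_family G"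
proof -
  define P where "P C \<longleftrightarrow> C \<in> sets F \<and> C \<subseteq> H \<and> emeasure M C > 0" for C
  have "\<exists>D. P C \<longrightarrow> D \<in> sets F \<and> D \<subseteq> C \<and> emeasure M D > 0 \<and> emeasure M (C - D) > 0" for C
    using nonatomic_split[OF assms(1), of C] assms(2) unfolding P_def by blast
  then obtain sel where sel: "\<And>C. P C \<Longrightarrow>
      sel C \<in> sets F \<and> sel C \<subseteq> C \<and> emeasure M (sel C) > 0 \<and> emeasure M (C - sel C) > 0"
    by metis
  define R where "R n = ((\<lambda>C. C - sel C) ^^ n) H" for n
  have R_Suc: "R (Suc n) = R n - sel (R n)" for n unfolding R_def by simp
  have PR: "P (R n)" for n
  proof (induction n)
    case 0
    then show ?case using assms(3,4) unfolding P_def R_def by simp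
  next
    case (Suc n)
    then show ?case using sel[OF Suc] unfolding P_def R_Suc by auto
  qed
  have R_mono: "R m \<subseteq> R n" if "n \<le> m" for n m
    using that by (induction m) (auto simp: R_Suc le_Suc_eq)
  define G where "G n = sel (R n)" for n
  have G_sub: "G n \<subseteq> R n" for n using sel[OF PR] unfolding G_def by blast
  have "G m \<inter> G n = {}" if "n < m" for n m
    using G_sub[of m] R_mono[of "Suc n" m] that unfolding G_def R_Suc by auto
  then have "disjoint_family G"
    unfolding disjoint_family_on_def by (metis Int_commute linorder_neqE_nat)
  moreover have "G i \<in> sets F" "G i \<subseteq> H" "emeasure M (G i) > 0" for i
    using sel[OF PR[of i]] PR[of i] unfolding G_def P_def by auto
  ultimately show ?thesis using that by blast
qed

lemma ennreal_ex_nat_bounds: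
  fixes a b :: ennreal
  assumes "b \<noteq> \<infinity>" "a \<noteq> 0"
  obtains k :: nat where "b \<le> of_nat k" "1 \<le> of_nat k * a"
proof -
  obtain k1 :: nat where k1: "b \<le> of_nat k1"
    using ennreal_Ex_less_of_nat assms(1) by (auto simp: top.not_eq_extremum intro: less_imp_le)
  obtain k2 :: nat where k2: "1 \<le> of_nat k2 * a"
  proof (cases a)
    case (real r)
    then have r: "r > 0" using assms(2) by auto
    obtain k2 :: nat where "1 / r \<le> k2" using real_arch_simple by blast
    then have "ennreal 1 \<le> ennreal (real k2 * r)" using r by (intro ennreal_leI) (simp add: field_simps)
    then show ?thesis using that[of k2] r real by (simp add: ennreal_mult' ennreal_of_nat_eq_real_of_nat)
  next
    case top
    then show ?thesis using that[of 1] by simp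
  qed
  have "b \<le> of_nat (max k1 k2)" using k1 by (simp add: order_trans)
  moreover have "1 \<le> of_nat (max k1 k2) * a"
    using k2 by (simp add: order_trans mult_right_mono)
  ultimately show ?thesis using that by blast
qed

lemma nn_integral_indicator_mult_eq_integral:
  assumes "integrable M a" "\<And>x. a x \<ge> 0" "G \<in> sets M"
  shows "(\<integral>\<^sup>+x. indicator G x * ennreal (a x) \<partial>M) = ennreal (\<integral>x. indicator G x * a x \<partial>M)"
proof -
  have "(\<integral>\<^sup>+x. indicator G x * ennreal (a x) \<partial>M) = (\<integral>\<^sup>+x. ennreal (indicator G x * a x) \<partial>M)"
    by (intro nn_integral_cong) (simp add: indicator_def)
  also have "\<dots> = ennreal (\<integral>x. indicator G x * a x \<partial>M)"
    using assms integrable_real_mult_indicator[OF assms(3,1)]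
    by (intro nn_integral_eq_integral) (auto simp: mult.commute)
  finally show ?thesis .
qed

lemma nn_cond_exp_indicator_integral:
  assumes "sigma_finite_subalgebra M F" "G \<in> sets F" "integrable M c" "\<And>x. c x \<ge> 0"
  shows "(\<integral>\<^sup>+x. indicator G x * nn_cond_exp M F (\<lambda>x. ennreal (c x)) x \<partial>M)
    = ennreal (\<integral>x. indicator G x * c x \<partial>M)"
proof -
  interpret sigma_finite_subalgebra M F by fact
  have [measurable]: "c \<in> borel_measurable M" using assms(3) by simp
  have "(\<integral>\<^sup>+x. indicator G x * nn_cond_exp M F (\<lambda>x. ennreal (c x)) x \<partial>M)
      = (\<integral>\<^sup>+x. indicator G x * ennreal (c x) \<partial>M)"
    using borel_measurable_indicator[OF assms(2)] by (intro nn_cond_exp_intg) auto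
  also have "\<dots> = ennreal (\<integral>x. indicator G x * c x \<partial>M)"
    using assms subalg by (intro nn_integral_indicator_mult_eq_integral) (auto simp: subalgebra_def)
  finally show ?thesis .
qed

lemma level_set_emeasure_pos:
  fixes a b :: "'a \<Rightarrow> ennreal"
  assumes "B \<in> sets M" "a \<in> borel_measurable M" "AE x in M. b x \<noteq> \<infinity>"
    and "(\<integral>\<^sup>+x. indicator B x * a x \<partial>M) \<noteq> 0"
    and "\<And>k. {x \<in> space M. x \<in> B \<and> b x \<le> of_nat k \<and> 1 \<le> of_nat k * a x} \<in> sets M"
  obtains k :: nat where "emeasure M {x \<in> space M. x \<in> B \<and> b x \<le> of_nat k \<and> 1 \<le> of_nat k * a x} > 0"
proof (rule ccontr)
  define H where "H k = {x \<in> space M. x \<in> B \<and> b x \<le> of_nat k \<and> 1 \<le> of_nat k * a x}" for k :: nat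
  assume "\<not> thesis"
  then have "H k \<in> null_sets M" for k
    using that[of k] assms(5)[of k] unfolding H_def by (auto simp: null_sets_def zero_less_iff_neq_zero)
  then have "AE x in M. \<forall>k. x \<notin> H k"
    by (intro AE_all_countable[THEN iffD2] allI AE_not_in)
  then have "AE x in M. indicator B x * a x = 0"
    using assms(3)
  proof eventually_elim
    case (elim x)
    show ?case
    proof (rule ccontr)
      assume "indicator B x * a x \<noteq> 0"
      then have "x \<in> B" "a x \<noteq> 0" by (auto simp: indicator_def split: if_splits)
      then obtain k where "b x \<le> of_nat k" "1 \<le> of_nat k * a x"
        using ennreal_ex_nat_bounds[OF elim(2)] by blast
      then have "x \<in> H k" using \<open>x \<in> B\<close> sets.sets_into_space[OF assms(1)] unfolding H_def by auto
      then show False using elim(1) by blast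
    qed
  qed
  then have "(\<integral>\<^sup>+x. indicator B x * a x \<partial>M) = 0"
    using assms(1,2) by (subst nn_integral_0_iff_AE) auto
  then show False using assms(4) by simp
qed

lemma nn_integral_level_set_bounds:
  fixes a b :: "'a \<Rightarrow> ennreal"
  assumes "G \<in> sets M" "\<And>x. x \<in> G \<Longrightarrow> b x \<le> of_nat k" "\<And>x. x \<in> G \<Longrightarrow> 1 \<le> of_nat k * a x"
    and "a \<in> borel_measurable M"
  shows "emeasure M G \<le> of_nat k * (\<integral>\<^sup>+x. indicator G x * a x \<partial>M)"
    and "(\<integral>\<^sup>+x. indicator G x * b x \<partial>M) \<le> of_nat k * of_nat k * (\<integral>\<^sup>+x. indicator G x * a x \<partial>M)"
proof -
  have "indicator G x \<le> of_nat k * (indicator G x * a x)" for x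
    using assms(3)[of x] by (cases "x \<in> G") simp_all
  then have "(\<integral>\<^sup>+x. indicator G x \<partial>M) \<le> (\<integral>\<^sup>+x. of_nat k * (indicator G x * a x) \<partial>M)"
    by (intro nn_integral_mono)
  then have "emeasure M G \<le> (\<integral>\<^sup>+x. of_nat k * (indicator G x * a x) \<partial>M)"
    using assms(1) by simp
  then show "emeasure M G \<le> of_nat k * (\<integral>\<^sup>+x. indicator G x * a x \<partial>M)"
    using assms(1,4) by (simp add: nn_integral_cmult)
  have "indicator G x * b x \<le> of_nat k * of_nat k * (indicator G x * a x)" for x
  proof (cases "x \<in> G")
    case True
    have "b x \<le> of_nat k * 1" using assms(2)[OF True] by simp
    also have "\<dots> \<le> of_nat k * (of_nat k * a x)" using assms(3)[OF True] by (rule mult_left_mono) simp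
    finally show ?thesis using True by (simp add: mult.assoc)
  qed simp
  then have "(\<integral>\<^sup>+x. indicator G x * b x \<partial>M) \<le> (\<integral>\<^sup>+x. of_nat k * of_nat k * (indicator G x * a x) \<partial>M)"
    by (intro nn_integral_mono)
  then show "(\<integral>\<^sup>+x. indicator G x * b x \<partial>M) \<le> of_nat k * of_nat k * (\<integral>\<^sup>+x. indicator G x * a x \<partial>M)"
    using assms(1,4) by (simp add: nn_integral_cmult)
qed

text \<open>On the sets \<open>{E b \<le> k, 1 \<le> k E a}\<close> the ratio of the conditional expectations is at most
  \<open>k\<^sup>2\<close>; one of them has positive measure inside \<open>B\<close> since \<open>E a\<close> does not vanish on \<open>B\<close>
  and \<open>E b\<close> is finite almost everywhere.\<close>

lemma cond_exp_bounded_ratio_subset: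
  fixes a b :: "'a \<Rightarrow> real"
  assumes "sigma_finite_subalgebra M F"
    and "integrable M a" "integrable M b" "\<And>x. a x \<ge> 0" "\<And>x. b x \<ge> 0"
    and "B \<in> sets F" "(\<integral>x. indicator B x * a x \<partial>M) > 0"
  obtains H Q where "H \<in> sets F" "H \<subseteq> B" "emeasure M H > 0"
    "\<And>G. G \<in> sets F \<Longrightarrow> G \<subseteq> H \<Longrightarrow> emeasure M G > 0 \<Longrightarrow> (\<integral>x. indicator G x * a x \<partial>M) > 0"
    "\<And>G. G \<in> sets F \<Longrightarrow> G \<subseteq> H \<Longrightarrow>
       (\<integral>x. indicator G x * b x \<partial>M) \<le> Q * (\<integral>x. indicator G x * a x \<partial>M)"
proof -
  interpret sigma_finite_subalgebra M F by fact
  have subM: "sets F \<subseteq> sets M" and space: "space F = space M"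
    using subalg unfolding subalgebra_def by auto
  define ea where "ea = nn_cond_exp M F (\<lambda>x. ennreal (a x))"
  define eb where "eb = nn_cond_exp M F (\<lambda>x. ennreal (b x))"
  have [measurable]: "ea \<in> borel_measurable F" "eb \<in> borel_measurable F"
    and ea_M: "ea \<in> borel_measurable M" and eb_M: "eb \<in> borel_measurable M"
    unfolding ea_def eb_def by simp_all
  have int_ea: "(\<integral>\<^sup>+x. indicator G x * ea x \<partial>M) = ennreal (\<integral>x. indicator G x * a x \<partial>M)"
    and int_eb: "(\<integral>\<^sup>+x. indicator G x * eb x \<partial>M) = ennreal (\<integral>x. indicator G x * b x \<partial>M)"
    if "G \<in> sets F" for G
    unfolding ea_def eb_def using nn_cond_exp_indicator_integral[OF assms(1) that] assms(2-5) by simp_all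
  have "(\<integral>\<^sup>+x. eb x \<partial>M) = (\<integral>\<^sup>+x. indicator (space M) x * eb x \<partial>M)"
    by (intro nn_integral_cong) simp
  also have "\<dots> \<noteq> \<infinity>" using int_eb[OF sets.top] unfolding space by simp
  finally have "AE x in M. eb x \<noteq> \<infinity>" by (rule nn_integral_PInf_AE[OF eb_M])
  define H where "H k = {x \<in> space M. x \<in> B \<and> eb x \<le> of_nat k \<and> 1 \<le> of_nat k * ea x}" for k :: nat
  have H_sets: "H k \<in> sets F" for k
    using assms(6) unfolding H_def space[symmetric] by measurable
  moreover have "(\<integral>\<^sup>+x. indicator B x * ea x \<partial>M) \<noteq> 0" using int_ea[OF assms(6)] assms(7) by simp
  ultimately obtain k where k: "emeasure M (H k) > 0"
    using level_set_emeasure_pos[OF _ ea_M \<open>AE x in M. eb x \<noteq> \<infinity>\<close>, of B] assms(6) subM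
    unfolding H_def by blast
  have H_sub: "H k \<subseteq> B" unfolding H_def by auto
  have positive: "emeasure M G > 0 \<Longrightarrow> (\<integral>x. indicator G x * a x \<partial>M) > 0"
    and ratio: "(\<integral>x. indicator G x * b x \<partial>M) \<le> real k * real k * (\<integral>x. indicator G x * a x \<partial>M)"
    if G: "G \<in> sets F" "G \<subseteq> H k" for G
  proof -
    have G_M: "G \<in> sets M" using G(1) subM by auto
    have level: "eb x \<le> of_nat k" "1 \<le> of_nat k * ea x" if "x \<in> G" for x
      using G(2) that unfolding H_def by auto
    note bounds = nn_integral_level_set_bounds[where a = ea and b = eb, OF G_M level ea_M]
    have "ennreal (\<integral>x. indicator G x * b x \<partial>M) \<le> of_nat k * of_nat k * ennreal (\<integral>x. indicator G x * a x \<partial>M)"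
      using bounds(2) unfolding int_ea[OF G(1)] int_eb[OF G(1)] .
    also have "\<dots> = ennreal (real k * real k * (\<integral>x. indicator G x * a x \<partial>M))"
      by (simp add: ennreal_mult' ennreal_of_nat_eq_real_of_nat)
    finally show "(\<integral>x. indicator G x * b x \<partial>M) \<le> real k * real k * (\<integral>x. indicator G x * a x \<partial>M)"
      using assms(4) by (subst (asm) ennreal_le_iff) (auto intro!: integral_nonneg)
    assume "emeasure M G > 0"
    from this bounds(1) have "0 < of_nat k * ennreal (\<integral>x. indicator G x * a x \<partial>M)"
      unfolding int_ea[OF G(1)] by (rule order.strict_trans2)
    then show "(\<integral>x. indicator G x * a x \<partial>M) > 0" by (simp add: ennreal_zero_less_mult_iff)
  qed
  show ?thesis by (rule that[OF H_sets H_sub k positive ratio])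
qed

lemma wce_norm_powr_ge_restriction:
  assumes "sigma_finite_subalgebra M F" "u \<in> borel_measurable M" "p > 0"
    and "lp_bounded_operator M p (wce M F w u)" "g \<in> lp_space M p" "h \<in> lp_space M p"
    and "G \<in> sets F" "c \<ge> 0" "\<And>x. indicator G x * g x = c * indicator G x * h x"
  shows "c powr p * (\<integral>x. indicator G x * \<bar>wce M F w u h x\<bar> powr p \<partial>M)
    \<le> lp_norm M p (wce M F w u g) powr p"
proof -
  interpret sigma_finite_subalgebra M F by fact
  define T where "T = wce M F w u"
  have T_lp: "T g \<in> lp_space M p" "T h \<in> lp_space M p"
    using lp_bounded_operatorD[OF assms(4)] assms(5,6) unfolding T_def by blast+
  have G_M: "G \<in> sets M" using assms(7) subalg by (auto simp: subalgebra_def)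
  have cG: "(\<lambda>x. c * indicator G x) \<in> borel_measurable F"
    by (intro borel_measurable_times borel_measurable_const borel_measurable_indicator assms(7))
  have "(\<lambda>y. indicator G y * g y) = (\<lambda>y. c * indicator G y * h y)" using assms(9) by (intro ext)
  then have "AE x in M. T (\<lambda>y. c * indicator G y * h y) x = indicator G x * T g x"
    using wce_pull_out[OF assms(1) borel_measurable_indicator[OF assms(7)] indicator_pos_le
        lp_spaceD(1)[OF assms(5)] assms(2), where w = w]
    unfolding T_def by simp
  moreover have "AE x in M. T (\<lambda>y. c * indicator G y * h y) x = c * indicator G x * T h x"
    using wce_pull_out[OF assms(1) cG _ lp_spaceD(1)[OF assms(6)] assms(2), where w = w] assms(8)
    unfolding T_def by simp
  ultimately have "AE x in M. indicator G x * \<bar>T g x\<bar> powr p = c powr p * (indicator G x * \<bar>T h x\<bar> powr p)"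
  proof eventually_elim
    case (elim x)
    then show ?case using assms(8) by (auto simp: indicator_def abs_mult powr_mult)
  qed
  then have "(\<integral>x. indicator G x * \<bar>T g x\<bar> powr p \<partial>M)
      = (\<integral>x. c powr p * (indicator G x * \<bar>T h x\<bar> powr p) \<partial>M)"
    using lp_spaceD(1)[OF T_lp(1)] lp_spaceD(1)[OF T_lp(2)] G_M by (intro integral_cong_AE) simp_all
  then show ?thesis
    using integral_indicator_powr_le_lp_norm[OF T_lp(1) G_M assms(3)] unfolding T_def by simp
qed

text \<open>With \<open>T = wce M F w u\<close>: \<open>f i\<close> is \<open>h\<close> restricted to \<open>G i\<close> and scaled so that \<open>T (f i)\<close> has
  unit \<open>L\<^sup>p\<close> norm on \<open>G i\<close>; by disjointness \<open>T (f i - f j)\<close> agrees with \<open>T (f i)\<close> on \<open>G i\<close>.\<close>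

lemma wce_separated_sequence:
  fixes G :: "nat \<Rightarrow> 'a set"
  assumes "sigma_finite_subalgebra M F" "u \<in> borel_measurable M" "p \<ge> 1"
    and "lp_bounded_operator M p (wce M F w u)" "h \<in> lp_space M p"
    and "\<And>i. G i \<in> sets F" "disjoint_family G"
    and "\<And>i. 0 < (\<integral>x. indicator (G i) x * \<bar>wce M F w u h x\<bar> powr p \<partial>M)"
    and "\<And>i. (\<integral>x. indicator (G i) x * \<bar>h x\<bar> powr p \<partial>M)
           \<le> Q * (\<integral>x. indicator (G i) x * \<bar>wce M F w u h x\<bar> powr p \<partial>M)"
  obtains f :: "nat \<Rightarrow> 'a \<Rightarrow> real" where "\<And>i. f i \<in> lp_space M p" "\<And>i. lp_norm M p (f i) \<le> Q powr (1 / p)"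
    "\<And>i j. i \<noteq> j \<Longrightarrow> 1 \<le> lp_norm M p (wce M F w u (\<lambda>x. f i x - f j x))"
proof -
  have p: "p > 0" using assms(3) by simp
  define I where "I i = (\<integral>x. indicator (G i) x * \<bar>wce M F w u h x\<bar> powr p \<partial>M)" for i
  have I: "I i > 0" for i unfolding I_def by (rule assms(8))
  define \<alpha> where "\<alpha> i = I i powr (- 1 / p)" for i
  have \<alpha>: "\<alpha> i > 0" "\<alpha> i powr p * I i = 1" for i
  proof -
    show "\<alpha> i > 0" using I[of i] unfolding \<alpha>_def by simp
    have "\<alpha> i powr p = I i powr (- 1)" unfolding \<alpha>_def using p by (simp add: powr_powr)
    then show "\<alpha> i powr p * I i = 1" using I[of i] by (simp add: powr_minus)
  qed
  define f where "f i x = \<alpha> i * indicator (G i) x * h x" for i x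
  have f_lp: "f i \<in> lp_space M p" for i
  proof -
    have "G i \<in> sets M" using assms(1,6) by (auto simp: sigma_finite_subalgebra_def subalgebra_def)
    then show ?thesis
      unfolding f_def using \<alpha>(1)[of i]
      by (intro lp_space_mult_bounded[OF assms(5) _ _ p, where c = "\<alpha> i"]) auto
  qed
  have "0 \<le> (\<integral>x. indicator (G 0) x * \<bar>h x\<bar> powr p \<partial>M)"
    by (intro Bochner_Integration.integral_nonneg) simp
  then have "0 \<le> Q * I 0" using assms(9)[of 0] unfolding I_def by linarith
  then have Q: "Q \<ge> 0" using I[of 0] by (simp add: zero_le_mult_iff)
  have f_norm: "lp_norm M p (f i) \<le> Q powr (1 / p)" for i
  proof (subst lp_norm_le_iff[OF p])
    have "\<bar>f i x\<bar> powr p = \<alpha> i powr p * (indicator (G i) x * \<bar>h x\<bar> powr p)" for x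
      unfolding f_def using \<alpha>(1)[of i] by (cases "x \<in> G i") (simp_all add: abs_mult powr_mult)
    then have "(\<integral>x. \<bar>f i x\<bar> powr p \<partial>M) = \<alpha> i powr p * (\<integral>x. indicator (G i) x * \<bar>h x\<bar> powr p \<partial>M)"
      by simp
    also have "\<dots> \<le> \<alpha> i powr p * (Q * I i)"
      using assms(9)[of i] unfolding I_def by (intro mult_left_mono) auto
    also have "\<dots> = (Q powr (1 / p)) powr p" using \<alpha>(2)[of i] Q p by (simp add: powr_powr)
    finally show "(\<integral>x. \<bar>f i x\<bar> powr p \<partial>M) \<le> (Q powr (1 / p)) powr p" .
  qed simp
  have "1 \<le> lp_norm M p (wce M F w u (\<lambda>x. f i x - f j x))" if "i \<noteq> j" for i j
  proof -
    have "indicator (G i) x * (f i x - f j x) = \<alpha> i * indicator (G i) x * h x" for x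
      using \<open>disjoint_family G\<close> that unfolding f_def disjoint_family_on_def by (auto simp: indicator_def)
    then have "\<alpha> i powr p * I i \<le> lp_norm M p (wce M F w u (\<lambda>x. f i x - f j x)) powr p"
      unfolding I_def using \<alpha>(1)[of i]
      by (intro wce_norm_powr_ge_restriction[OF assms(1,2) p assms(4) lp_space_diff[OF f_lp f_lp p]
            assms(5,6)]) auto
    then show ?thesis
      using \<alpha>(2)[of i] lp_norm_ge_iff[OF p, of 1 M] lp_norm_powr[OF p, of M] by simp
  qed
  with f_lp f_norm show ?thesis by (rule that)
qed

lemma wce_restriction_powr_integral_pos:
  assumes "sigma_finite_subalgebra M F" "u \<in> borel_measurable M" "p > 0"
    and "lp_bounded_operator M p (wce M F w u)" "B \<in> sets F" "h \<in> lp_space M p"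
    and "\<And>x. x \<notin> B \<Longrightarrow> h x = 0" "\<not> (AE x in M. wce M F w u h x = 0)"
  shows "0 < (\<integral>x. indicator B x * \<bar>wce M F w u h x\<bar> powr p \<partial>M)"
proof -
  define Th where "Th = wce M F w u h"
  have Th: "Th \<in> lp_space M p" unfolding Th_def by (rule lp_bounded_operatorD[OF assms(4,6)])
  have B_M: "B \<in> sets M" using assms(1,5) by (auto simp: sigma_finite_subalgebra_def subalgebra_def)
  have "(\<lambda>y. indicator B y * h y) = h" using assms(7) by (intro ext) (auto simp: indicator_def)
  then have "AE x in M. Th x = indicator B x * Th x"
    using wce_pull_out[OF assms(1) borel_measurable_indicator[OF assms(5)] indicator_pos_le
        lp_spaceD(1)[OF assms(6)] assms(2), where w = w]
    unfolding Th_def by simp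
  then have "AE x in M. indicator B x * \<bar>Th x\<bar> powr p = \<bar>Th x\<bar> powr p"
    by eventually_elim (auto simp: indicator_def)
  then have "(\<integral>x. indicator B x * \<bar>Th x\<bar> powr p \<partial>M) = lp_norm M p Th powr p"
    unfolding lp_norm_powr[OF assms(3)] using lp_spaceD(1)[OF Th] B_M
    by (intro integral_cong_AE) simp_all
  moreover have "lp_norm M p Th \<noteq> 0"
    using lp_norm_zero_imp_AE_zero[OF Th assms(3)] assms(8) unfolding Th_def by auto
  ultimately show ?thesis using lp_norm_nonneg[of M p Th] unfolding Th_def by simp
qed

lemma wce_nonatomic_separated_sequence:
  assumes "sigma_finite_subalgebra M F" "u \<in> borel_measurable M" "p \<ge> 1"
    and "lp_bounded_operator M p (wce M F w u)" "h \<in> lp_space M p"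
    and "B \<in> sets F" "\<not> (\<exists>A. sub_atom M F A \<and> A \<subseteq> B)"
    and "0 < (\<integral>x. indicator B x * \<bar>wce M F w u h x\<bar> powr p \<partial>M)"
  obtains f :: "nat \<Rightarrow> 'a \<Rightarrow> real" and \<rho> :: real
  where "\<And>i. f i \<in> lp_space M p" "\<And>i. lp_norm M p (f i) \<le> \<rho>"
    "\<And>i j. i \<noteq> j \<Longrightarrow> 1 \<le> lp_norm M p (wce M F w u (\<lambda>x. f i x - f j x))"
proof -
  have subM: "sets F \<subseteq> sets M" using assms(1) by (auto simp: sigma_finite_subalgebra_def subalgebra_def)
  obtain H Q where H: "H \<in> sets F" "H \<subseteq> B" "emeasure M H > 0"
    and positive: "\<And>G. G \<in> sets F \<Longrightarrow> G \<subseteq> H \<Longrightarrow> emeasure M G > 0 \<Longrightarrow>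
        (\<integral>x. indicator G x * \<bar>wce M F w u h x\<bar> powr p \<partial>M) > 0"
    and ratio: "\<And>G. G \<in> sets F \<Longrightarrow> G \<subseteq> H \<Longrightarrow> (\<integral>x. indicator G x * \<bar>h x\<bar> powr p \<partial>M)
        \<le> Q * (\<integral>x. indicator G x * \<bar>wce M F w u h x\<bar> powr p \<partial>M)"
    using cond_exp_bounded_ratio_subset[OF assms(1) lp_spaceD(2)[OF lp_bounded_operatorD[OF assms(4,5)]]
        lp_spaceD(2)[OF assms(5)] powr_ge_zero powr_ge_zero assms(6,8)] by blast
  have "\<not> (\<exists>A. sub_atom M F A \<and> A \<subseteq> H)" using assms(7) H(2) by blast
  then obtain G :: "nat \<Rightarrow> 'a set" where G: "\<And>i. G i \<in> sets F" "\<And>i. G i \<subseteq> H"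
      "\<And>i. emeasure M (G i) > 0" "disjoint_family G"
    using nonatomic_disjoint_family[OF subM _ H(1,3)] by blast
  obtain f :: "nat \<Rightarrow> 'a \<Rightarrow> real" where "\<And>i. f i \<in> lp_space M p" "\<And>i. lp_norm M p (f i) \<le> Q powr (1 / p)"
    "\<And>i j. i \<noteq> j \<Longrightarrow> 1 \<le> lp_norm M p (wce M F w u (\<lambda>x. f i x - f j x))"
    using wce_separated_sequence[OF assms(1-5) G(1,4) positive[OF G(1-3)] ratio[OF G(1,2)]] by blast
  then show ?thesis by (rule that)
qed

theorem corollary2p4:
  fixes M F :: "'a measure" and p :: real and w u :: "'a \<Rightarrow> real"
    and An :: "nat \<Rightarrow> 'a set" and B :: "'a set"
  assumes "complete_measure M" and "sigma_finite_measure M"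
    and "sigma_finite_subalgebra M F"
    and "1 \<le> p"
    and "w \<in> borel_measurable M" and "u \<in> borel_measurable M"
    and "\<forall>f \<in> lp_space M p. conditionable M F (\<lambda>x. u x * f x)"
    and "lp_bounded_operator M p (wce M F w u)"
    and "\<forall>n. sub_atom M F (An n) \<or> An n = {}"
    and "disjoint_family An"
    and "B \<in> sets F" and "B \<inter> (\<Union>n. An n) = {}"
    and "(\<Union>n. An n) \<union> B = space M"
    and "\<not> (\<exists>A. sub_atom M F A \<and> A \<subseteq> B)"
    and "emeasure M B > 0"
    and "\<exists>f \<in> lp_space M p.
           \<not> (AE x in M. wce M F w u (\<lambda>y. f y * indicator B y) x = 0)"
  shows "\<not> lp_nuclear M p (wce M F w u)"
proof
  assume nuclear: "lp_nuclear M p (wce M F w u)"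
  have p: "p > 0" using assms(4) by simp
  obtain f0 where f0: "f0 \<in> lp_space M p"
    and nonzero: "\<not> (AE x in M. wce M F w u (\<lambda>y. f0 y * indicator B y) x = 0)"
    using assms(16) by blast
  define h where "h = (\<lambda>y. f0 y * indicator B y)"
  have "B \<in> sets M" using assms(3,11) by (auto simp: sigma_finite_subalgebra_def subalgebra_def)
  then have h: "h \<in> lp_space M p"
    using lp_space_mult_bounded[OF f0 borel_measurable_indicator _ p, of B 1]
    unfolding h_def by (auto simp: mult.commute)
  have "0 < (\<integral>x. indicator B x * \<bar>wce M F w u h x\<bar> powr p \<partial>M)"
    by (rule wce_restriction_powr_integral_pos[OF assms(3,6) p assms(8,11) h _ nonzero[folded h_def]])
      (simp add: h_def)
  then obtain f :: "nat \<Rightarrow> 'a \<Rightarrow> real" and \<rho> where f: "\<And>i. f i \<in> lp_space M p" "\<And>i. lp_norm M p (f i) \<le> \<rho>"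
    and separated: "\<And>i j. i \<noteq> j \<Longrightarrow> 1 \<le> lp_norm M p (wce M F w u (\<lambda>x. f i x - f j x))"
    using wce_nonatomic_separated_sequence[OF assms(3,6,4,8) h assms(11,14)] by metis
  obtain i j where ij: "i \<noteq> j" and "lp_norm M p (wce M F w u (\<lambda>x. f i x - f j x)) < 1"
    using lp_nuclear_close_images[where f = f, OF assms(4) nuclear f zero_less_one] by blast
  with separated[OF ij] show False by linarith
qed

end
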